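(* Let $a$ be a nonzero even integer, $x\in\mathbb Z\setminus\{0\}$, $\sigma\in\{1,-1\}$, $r\in\mathbb Q\setminus\{0\}$, and suppose that $$\alpha= r\left(\frac{x+\sqrt{x^2+4\sigma}}{2}\right)^{a}$$ is a positive irrational real number. Then there is a constant $C=C(\alpha)>0$ such that $\delta_{\min}^{(\alpha)}(N)\le C/N$ for all integers $N\ge2$. (For example, this applies to $\alpha=(3+\sqrt5)/2$.)
   Context: For irrational $\alpha>0$, the numbers $\alpha m^2+n^2$ with integers $m,n\ge 1$ are pairwise distinct; list them in increasing order as $0<\lambda_1<\lambda_2<\cdots$. For $N\ge 2$ define $\delta_{\min}^{(\alpha)}(N)=\min\{\lambda_{i+1}-\lambda_i : 1\le i<N\}$. *)

theory Defs
  imports "HOL-Analysis.Analysis"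
begin

definition spec_set :: "real \<Rightarrow> real set" where
  "spec_set \<alpha> = {\<alpha> * (of_int m)^2 + (of_int n)^2 | m n :: int. m \<ge> 1 \<and> n \<ge> 1}"

definition spec_lambda :: "real \<Rightarrow> nat \<Rightarrow> real" where
  "spec_lambda \<alpha> i = (THE s. s \<in> spec_set \<alpha> \<and> card {t \<in> spec_set \<alpha>. t < s} = i - 1)"

definition delta_min :: "real \<Rightarrow> nat \<Rightarrow> real" where
  "delta_min \<alpha> N = Min ((\<lambda>i. spec_lambda \<alpha> (i + 1) - spec_lambda \<alpha> i) ` {1..<N})"

end

(*
  The spectrum contains alpha (f1 + e1)^2 + (f2 - e2)^2 and alpha (f1 - e1)^2 + (f2 + e2)^2,
  which differ by 4 (alpha e1 f1 - e2 f2).  Since a is even, theta = e^a for the unit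
  e = (x + sqrt(x^2 + 4 sigma))/2 has norm 1, so theta + 1/theta = t is an integer and
  alpha = (p/q) eta^(+-1) with eta = max(theta, 1/theta) > 2.  The Lucas sequences U_k, V_k of
  z^2 - t z + 1 satisfy eta U_k V_k - (U_(k+1)^2 - U_k^2) = -eta^(-2k) with all factors O(eta^k).
  This gives two elements of the spectrum below O(eta^(2k)), hence of index O(eta^(2k)) by
  counting lattice points, at distance O(eta^(-2k)); interpolating between consecutive k
  yields delta_min(N) = O(1/N).
*)

theory Submission
  imports Defs
begin

lemma spec_setI:
  "1 \<le> m \<Longrightarrow> 1 \<le> n \<Longrightarrow> \<alpha> * (of_int m)^2 + (of_int n)^2 \<in> spec_set \<alpha>"
  unfolding spec_set_def by blast

lemma spec_set_pos: "\<alpha> \<ge> 0 \<Longrightarrow> s \<in> spec_set \<alpha> \<Longrightarrow> 0 < s"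
  unfolding spec_set_def by (auto intro!: add_nonneg_pos)

lemma spec_set_below_subset:
  assumes "\<alpha> > 0"
  shows "{t \<in> spec_set \<alpha>. t < s} \<subseteq>
    (\<lambda>(m, n). \<alpha> * (of_int m)^2 + (of_int n)^2) ` ({1..\<lfloor>sqrt (s / \<alpha>)\<rfloor>} \<times> {1..\<lfloor>sqrt s\<rfloor>})"
proof
  fix t assume "t \<in> {t \<in> spec_set \<alpha>. t < s}"
  then obtain m n :: int where t: "t = \<alpha> * (of_int m)^2 + (of_int n)^2" "m \<ge> 1" "n \<ge> 1" "t < s"
    unfolding spec_set_def by blast
  have "0 < \<alpha> * (of_int m)^2" "0 < (of_int n :: real)^2"
    using t assms by auto
  with t have "\<alpha> * (of_int m)^2 < s" "(of_int n)^2 < s"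
    by linarith+
  then have "(of_int m)^2 < s / \<alpha>" "(of_int n)^2 < s"
    using assms by (simp_all add: field_simps)
  then have "m \<le> \<lfloor>sqrt (s / \<alpha>)\<rfloor>" "n \<le> \<lfloor>sqrt s\<rfloor>"
    by (auto simp: le_floor_iff intro!: less_imp_le real_less_rsqrt)
  with t show "t \<in> (\<lambda>(m, n). \<alpha> * (of_int m)^2 + (of_int n)^2) ` ({1..\<lfloor>sqrt (s / \<alpha>)\<rfloor>} \<times> {1..\<lfloor>sqrt s\<rfloor>})"
    by (intro image_eqI[where x = "(m, n)"]) auto
qed

lemma finite_spec_set_below:
  assumes "\<alpha> > 0"
  shows "finite {t \<in> spec_set \<alpha>. t < s}"
  using finite_subset[OF spec_set_below_subset[OF assms]] by blast

definition spec_rank :: "real \<Rightarrow> real \<Rightarrow> nat" where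
  "spec_rank \<alpha> s = card {t \<in> spec_set \<alpha>. t < s}"

lemma spec_rank_le_div_sqrt:
  assumes "\<alpha> > 0" "s > 0"
  shows "real (spec_rank \<alpha> s) \<le> s / sqrt \<alpha>"
proof -
  let ?M = "\<lfloor>sqrt (s / \<alpha>)\<rfloor>" and ?N = "\<lfloor>sqrt s\<rfloor>"
  have "spec_rank \<alpha> s \<le> card ({1..?M} \<times> {1..?N})"
    unfolding spec_rank_def using card_mono[OF _ spec_set_below_subset[OF assms(1)]] card_image_le
    by (meson finite_SigmaI finite_atLeastAtMost_int finite_imageI le_trans)
  also have "\<dots> = nat ?M * nat ?N" by (simp add: card_cartesian_product)
  finally have "real (spec_rank \<alpha> s) \<le> real (nat ?M) * real (nat ?N)"
    by (metis of_nat_le_iff of_nat_mult)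
  also have "\<dots> \<le> sqrt (s / \<alpha>) * sqrt s"
    using assms by (intro mult_mono of_nat_floor) auto
  also have "\<dots> = s / sqrt \<alpha>"
    using assms by (simp add: real_sqrt_divide)
  finally show ?thesis .
qed

lemma spec_rank_strict_mono:
  assumes "\<alpha> > 0" "s \<in> spec_set \<alpha>" "s < s'"
  shows "spec_rank \<alpha> s < spec_rank \<alpha> s'"
proof -
  have "insert s {t \<in> spec_set \<alpha>. t < s} \<subseteq> {t \<in> spec_set \<alpha>. t < s'}"
    using assms by auto
  then have "card (insert s {t \<in> spec_set \<alpha>. t < s}) \<le> spec_rank \<alpha> s'"
    unfolding spec_rank_def by (rule card_mono[OF finite_spec_set_below[OF assms(1)]])
  then show ?thesis
    by (simp add: spec_rank_def finite_spec_set_below[OF assms(1)])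
qed

lemma inj_on_spec_rank:
  assumes "\<alpha> > 0"
  shows "inj_on (spec_rank \<alpha>) (spec_set \<alpha>)"
  by (rule inj_onI) (metis assms linorder_neq_iff order_less_irrefl spec_rank_strict_mono)

lemma spec_lambda_spec_rank:
  assumes "\<alpha> > 0" "s \<in> spec_set \<alpha>"
  shows "spec_lambda \<alpha> (spec_rank \<alpha> s + 1) = s"
  unfolding spec_lambda_def
proof (rule the_equality)
  show "s \<in> spec_set \<alpha> \<and> card {t \<in> spec_set \<alpha>. t < s} = spec_rank \<alpha> s + 1 - 1"
    using assms by (simp add: spec_rank_def)
next
  fix s' assume "s' \<in> spec_set \<alpha> \<and> card {t \<in> spec_set \<alpha>. t < s'} = spec_rank \<alpha> s + 1 - 1"
  then show "s' = s"
    using inj_on_spec_rank[OF assms(1)] assms(2) by (auto simp: spec_rank_def inj_on_def)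
qed

lemma spec_rank_image_below:
  assumes "\<alpha> > 0"
  shows "spec_rank \<alpha> ` {t \<in> spec_set \<alpha>. t < s} = {..<spec_rank \<alpha> s}"
proof (rule card_subset_eq)
  show "spec_rank \<alpha> ` {t \<in> spec_set \<alpha>. t < s} \<subseteq> {..<spec_rank \<alpha> s}"
    using spec_rank_strict_mono[OF assms] by auto
  show "card (spec_rank \<alpha> ` {t \<in> spec_set \<alpha>. t < s}) = card {..<spec_rank \<alpha> s}"
    using card_image[OF inj_on_subset[OF inj_on_spec_rank[OF assms]]]
    by (simp add: spec_rank_def)
qed simp

lemma delta_min_le_gap:
  assumes "\<alpha> > 0" "s \<in> spec_set \<alpha>" "s' \<in> spec_set \<alpha>" "s < s'" "spec_rank \<alpha> s' < N"
  shows "delta_min \<alpha> N \<le> s' - s"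
proof -
  define i where "i = spec_rank \<alpha> s + 1"
  have "i < spec_rank \<alpha> s' + 1"
    using spec_rank_strict_mono[OF assms(1,2,4)] by (simp add: i_def)
  then obtain s'' where s'': "s'' \<in> spec_set \<alpha>" "s'' \<le> s'" "spec_rank \<alpha> s'' = i"
  proof (cases "i = spec_rank \<alpha> s'")
    case False
    with \<open>i < spec_rank \<alpha> s' + 1\<close> have "i \<in> spec_rank \<alpha> ` {t \<in> spec_set \<alpha>. t < s'}"
      unfolding spec_rank_image_below[OF assms(1)] by simp
    with that show ?thesis by force
  qed (use assms(3) in auto)
  have "delta_min \<alpha> N \<le> spec_lambda \<alpha> (i + 1) - spec_lambda \<alpha> i"
    unfolding delta_min_def using \<open>i < spec_rank \<alpha> s' + 1\<close> assms(5) by (intro Min_le) (auto simp: i_def)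
  also have "\<dots> = s'' - s"
    using spec_lambda_spec_rank[OF assms(1)] s'' assms(2) unfolding i_def by metis
  finally show ?thesis using s'' by linarith
qed

lemma delta_min_le_delta_min_2: "N \<ge> 2 \<Longrightarrow> delta_min \<alpha> N \<le> delta_min \<alpha> 2"
  unfolding delta_min_def by (intro Min_antimono) auto

fun lucas_U :: "int \<Rightarrow> int \<Rightarrow> nat \<Rightarrow> int" where
  "lucas_U P Q 0 = 0"
| "lucas_U P Q (Suc 0) = 1"
| "lucas_U P Q (Suc (Suc n)) = P * lucas_U P Q (Suc n) - Q * lucas_U P Q n"

fun lucas_V :: "int \<Rightarrow> int \<Rightarrow> nat \<Rightarrow> int" where
  "lucas_V P Q 0 = 2"
| "lucas_V P Q (Suc 0) = P"
| "lucas_V P Q (Suc (Suc n)) = P * lucas_V P Q (Suc n) - Q * lucas_V P Q n"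

lemma lucas_U_closed_form:
  fixes e f :: "'a :: comm_ring_1"
  assumes "e + f = of_int P" "e * f = of_int Q"
  shows "(e - f) * of_int (lucas_U P Q n) = e^n - f^n"
  using assms
proof (induction P Q n rule: lucas_U.induct)
  case (3 P Q n)
  have "(e - f) * of_int (lucas_U P Q (Suc (Suc n)))
      = of_int P * ((e - f) * of_int (lucas_U P Q (Suc n))) - of_int Q * ((e - f) * of_int (lucas_U P Q n))"
    by (simp add: algebra_simps)
  also have "\<dots> = (e + f) * (e^Suc n - f^Suc n) - e * f * (e^n - f^n)"
    using 3 by simp
  also have "\<dots> = e^Suc (Suc n) - f^Suc (Suc n)"
    by (simp add: algebra_simps)
  finally show ?case .
qed simp_all

lemma lucas_V_closed_form:
  fixes e f :: "'a :: comm_ring_1"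
  assumes "e + f = of_int P" "e * f = of_int Q"
  shows "of_int (lucas_V P Q n) = e^n + f^n"
  using assms
proof (induction P Q n rule: lucas_V.induct)
  case (3 P Q n)
  have "of_int (lucas_V P Q (Suc (Suc n)))
      = of_int P * of_int (lucas_V P Q (Suc n)) - of_int Q * (of_int (lucas_V P Q n) :: 'a)"
    by simp
  also have "\<dots> = (e + f) * (e^Suc n + f^Suc n) - e * f * (e^n + f^n)"
    using 3 by simp
  also have "\<dots> = e^Suc (Suc n) + f^Suc (Suc n)"
    by (simp add: algebra_simps)
  finally show ?case .
qed simp_all

lemma lucas_unit_closed_forms:
  fixes \<eta> :: real
  assumes "\<eta> \<noteq> 0" "of_int t = \<eta> + 1 / \<eta>"
  shows "(\<eta> - 1 / \<eta>) * of_int (lucas_U t 1 k) = \<eta>^k - 1 / \<eta>^k"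
    and "of_int (lucas_V t 1 k) = \<eta>^k + 1 / \<eta>^k"
proof -
  have roots: "\<eta> + 1 / \<eta> = of_int t" "\<eta> * (1 / \<eta>) = of_int 1"
    using assms by auto
  show "(\<eta> - 1 / \<eta>) * of_int (lucas_U t 1 k) = \<eta>^k - 1 / \<eta>^k"
    using lucas_U_closed_form[OF roots] by (simp add: power_one_over)
  show "of_int (lucas_V t 1 k) = \<eta>^k + 1 / \<eta>^k"
    using lucas_V_closed_form[OF roots] by (simp add: power_one_over)
qed

lemma lucas_unit_identity:
  fixes \<eta> :: real
  assumes \<eta>: "\<eta> > 1" and t: "of_int t = \<eta> + 1 / \<eta>"
  shows "\<eta> * of_int (lucas_U t 1 k) * of_int (lucas_V t 1 k)
           = (of_int (lucas_U t 1 (Suc k)))^2 - (of_int (lucas_U t 1 k))^2 - 1 / \<eta>^(2 * k)"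
proof -
  define D where "D = \<eta> - 1 / \<eta>"
  define X where "X = \<eta>^k"
  have "D \<noteq> 0" "X \<noteq> 0" using \<eta> less_1_mult[of \<eta> \<eta>] by (auto simp: D_def X_def field_simps)
  \<comment> \<open>after multiplying by \<open>D\<^sup>2\<close> the claim is a polynomial identity in \<open>\<eta>\<close>, \<open>X\<close> and their inverses\<close>
  have "D^2 * (\<eta> * a * b - c^2 + a^2 + x'^2) = 0"
    if "D * a = X - x'" "D * c = \<eta> * X - \<eta>' * x'" "b = X + x'"
       "X * x' = 1" "\<eta> * \<eta>' = 1" "D = \<eta> - \<eta>'" for a b c x' \<eta>' :: real
    using that by algebra
  from this[where a = "lucas_U t 1 k" and b = "lucas_V t 1 k" and c = "lucas_U t 1 (Suc k)"
      and x' = "1 / X" and \<eta>' = "1 / \<eta>"]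
  have "D^2 * (\<eta> * of_int (lucas_U t 1 k) * of_int (lucas_V t 1 k) - (of_int (lucas_U t 1 (Suc k)))^2
      + (of_int (lucas_U t 1 k))^2 + (1 / X)^2) = 0"
    using lucas_unit_closed_forms[OF _ t] \<eta> \<open>X \<noteq> 0\<close> unfolding D_def X_def by simp
  then show ?thesis
    using \<open>D \<noteq> 0\<close> by (simp add: X_def power_one_over power_mult[symmetric] mult.commute)
qed

lemma lucas_U_unit_bounds:
  fixes \<eta> :: real
  assumes \<eta>: "\<eta> > 2" and t: "of_int t = \<eta> + 1 / \<eta>" and k: "k \<ge> 1"
  shows "0 < lucas_U t 1 k" "lucas_U t 1 k < lucas_U t 1 (Suc k)"
    and "of_int (lucas_U t 1 k) < \<eta>^k" "of_int (lucas_U t 1 (Suc k)) < \<eta>^Suc k"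
proof -
  define X where "X = \<eta>^k"
  define D where "D = \<eta> - 1 / \<eta>"
  have u0: "D * of_int (lucas_U t 1 k) = X - 1 / X"
    using lucas_unit_closed_forms(1)[OF _ t, of k] \<eta> by (simp add: D_def X_def)
  have u1: "D * of_int (lucas_U t 1 (Suc k)) = \<eta> * X - 1 / (\<eta> * X)"
    using lucas_unit_closed_forms(1)[OF _ t, of "Suc k"] \<eta> by (simp add: D_def X_def)
  have X: "X > 1" unfolding X_def using \<eta> k by (intro one_less_power) auto
  have "1 + \<eta> < \<eta> * \<eta>" using mult_strict_right_mono[of 2 \<eta> \<eta>] \<eta> by linarith
  then have D: "D > 1" unfolding D_def using \<eta> by (simp add: field_simps)
  have "0 < 1 / (\<eta> * X)" "1 / (\<eta> * X) < 1 / X" "X < \<eta> * X" "1 / X < 1"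
    using \<eta> X by (auto simp: field_simps)
  then have DU: "0 < D * lucas_U t 1 k" "D * lucas_U t 1 k < X"
      "D * lucas_U t 1 k < D * lucas_U t 1 (Suc k)" "D * lucas_U t 1 (Suc k) < \<eta> * X"
    unfolding u0 u1 using X by linarith+
  then show "0 < lucas_U t 1 k" "lucas_U t 1 k < lucas_U t 1 (Suc k)"
    using D by (auto simp: zero_less_mult_iff)
  then have "of_int (lucas_U t 1 k) < D * lucas_U t 1 k" "of_int (lucas_U t 1 (Suc k)) < D * lucas_U t 1 (Suc k)"
    using D by simp_all
  with DU show "of_int (lucas_U t 1 k) < \<eta>^k" "of_int (lucas_U t 1 (Suc k)) < \<eta>^Suc k"
    unfolding X_def by simp_all
qed

lemma lucas_near_solution:
  fixes \<eta> :: real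
  assumes \<eta>: "\<eta> > 2" and t: "of_int t = \<eta> + 1 / \<eta>" and k: "k \<ge> 1"
  shows "\<exists>u v w z :: int. 0 < u \<and> u < v \<and> 0 < w \<and> w < z \<and>
           of_int v \<le> 2 * \<eta>^Suc k \<and> of_int z \<le> 2 * \<eta>^Suc k \<and>
           \<eta> * of_int u * of_int v - of_int w * of_int z = - 1 / \<eta>^(2 * k)"
proof -
  define U0 where "U0 = lucas_U t 1 k"
  define U1 where "U1 = lucas_U t 1 (Suc k)"
  define V where "V = lucas_V t 1 k"
  have U: "0 < U0" "U0 < U1" "of_int U0 < \<eta>^k" "of_int U1 < \<eta>^Suc k"
    using lucas_U_unit_bounds[OF \<eta> t k] unfolding U0_def U1_def by auto
  have X: "\<eta>^k > 1" "1 / \<eta>^k < 1" "\<eta>^k < \<eta>^Suc k"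
    using \<eta> k by (auto intro: one_less_power)
  have "of_int V = \<eta>^k + 1 / \<eta>^k"
    using lucas_unit_closed_forms(2)[OF _ t] \<eta> unfolding V_def by simp
  then have V: "U0 < V" "of_int V \<le> 2 * \<eta>^Suc k"
    using U X by (smt (verit) divide_pos_pos of_int_less_iff zero_less_power)+
  have "\<eta> * of_int U0 * of_int V - of_int (U1 - U0) * of_int (U1 + U0) = - 1 / \<eta>^(2 * k)"
    using lucas_unit_identity[OF _ t, of k] \<eta> unfolding U0_def U1_def V_def
    by (simp add: algebra_simps power2_eq_square)
  moreover have "of_int (U1 + U0) \<le> 2 * \<eta>^Suc k"
    using U X by simp
  ultimately show ?thesis
    using U V by (intro exI[of _ U0] exI[of _ V] exI[of _ "U1 - U0"] exI[of _ "U1 + U0"]) auto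
qed

lemma spec_set_gap_from_products:
  fixes \<alpha> Y :: real and e1 f1 e2 f2 :: int
  assumes "\<alpha> > 0" "0 < e1" "e1 < f1" "0 < e2" "e2 < f2" "of_int f1 \<le> Y" "of_int f2 \<le> Y"
    and "\<alpha> * of_int e1 * of_int f1 \<noteq> of_int e2 * of_int f2"
  shows "\<exists>s s'. s \<in> spec_set \<alpha> \<and> s' \<in> spec_set \<alpha> \<and> s < s' \<and> s' \<le> 4 * (\<alpha> + 1) * Y^2 \<and>
           s' - s = 4 * \<bar>\<alpha> * of_int e1 * of_int f1 - of_int e2 * of_int f2\<bar>"
proof -
  define s1 where "s1 = \<alpha> * (of_int (f1 + e1))^2 + (of_int (f2 - e2))^2"
  define s2 where "s2 = \<alpha> * (of_int (f1 - e1))^2 + (of_int (f2 + e2))^2"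
  have spec: "s1 \<in> spec_set \<alpha>" "s2 \<in> spec_set \<alpha>"
    unfolding s1_def s2_def by (rule spec_setI; use assms in simp)+
  have "s1 - s2 = 4 * (\<alpha> * of_int e1 * of_int f1 - of_int e2 * of_int f2)"
    unfolding s1_def s2_def by (simp add: algebra_simps power2_eq_square)
  moreover have bound: "(of_int (f + e))^2 \<le> (2 * Y)^2" "(of_int (f - e))^2 \<le> (2 * Y)^2"
    if "0 < e" "e < f" "of_int f \<le> Y" for e f :: int
    using that by (intro power_mono; simp)+
  have "s1 \<le> \<alpha> * (2 * Y)^2 + (2 * Y)^2" "s2 \<le> \<alpha> * (2 * Y)^2 + (2 * Y)^2"
    unfolding s1_def s2_def using assms bound[of e1 f1] bound[of e2 f2]
    by (auto intro!: add_mono mult_left_mono)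
  then have "max s1 s2 \<le> 4 * (\<alpha> + 1) * Y^2"
    by (simp add: algebra_simps power2_eq_square)
  ultimately show ?thesis
    using spec assms(8)
    by (intro exI[of _ "min s1 s2"] exI[of _ "max s1 s2"]) (auto simp: min_def max_def)
qed

lemma mult_less_mult_of_ge_one:
  fixes a b c d :: int
  assumes "0 < a" "a < b" "1 \<le> c" "1 \<le> d"
  shows "d * a < c * d * b"
proof -
  have "d * a < d * b" using assms by simp
  also have "d * b \<le> c * (d * b)" using assms by simp
  finally show ?thesis by (simp add: mult.assoc)
qed

lemma near_products_of_multiple:
  fixes \<eta> \<alpha> \<delta> :: real and p q u v w z :: int
  assumes p: "p \<ge> 1" and q: "q \<ge> 1" and \<alpha>: "\<alpha> = of_int p * \<eta> / of_int q"
    and uvwz: "0 < u" "u < v" "0 < w" "w < z"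
    and near: "\<eta> * of_int u * of_int v - of_int w * of_int z = - \<delta>" and \<delta>: "\<delta> > 0"
  shows "\<exists>e1 f1 e2 f2 :: int. 0 < e1 \<and> e1 < f1 \<and> 0 < e2 \<and> e2 < f2 \<and> max f1 f2 = p * q * max v z \<and>
           \<alpha> * of_int e1 * of_int f1 \<noteq> of_int e2 * of_int f2 \<and>
           \<bar>\<alpha> * of_int e1 * of_int f1 - of_int e2 * of_int f2\<bar> \<le> (of_int p)^2 * of_int q * \<delta>"
proof -
  have "\<alpha> * of_int (q * u) * of_int (p * q * v) - of_int (p * w) * of_int (p * q * z)
      = (of_int p)^2 * of_int q * (\<eta> * of_int u * of_int v - of_int w * of_int z)"
    using q unfolding \<alpha> by (simp add: field_simps power2_eq_square)
  also have "\<dots> = - ((of_int p)^2 * of_int q * \<delta>)"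
    unfolding near by simp
  finally have diff: "\<alpha> * of_int (q * u) * of_int (p * q * v) - of_int (p * w) * of_int (p * q * z)
      = - ((of_int p)^2 * of_int q * \<delta>)" .
  moreover have "(of_int p)^2 * of_int q * \<delta> > 0" using p q \<delta> by simp
  ultimately have "\<alpha> * of_int (q * u) * of_int (p * q * v) \<noteq> of_int (p * w) * of_int (p * q * z)"
    "\<bar>\<alpha> * of_int (q * u) * of_int (p * q * v) - of_int (p * w) * of_int (p * q * z)\<bar> \<le> (of_int p)^2 * of_int q * \<delta>"
    by linarith+
  moreover have "0 < q * u" "q * u < p * q * v" "0 < p * w" "p * w < p * q * z"
    "max (p * q * v) (p * q * z) = p * q * max v z"
    using uvwz p q mult_less_mult_of_ge_one[of u v p q] mult_less_mult_of_ge_one[of w z q p]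
    by (simp_all add: mult_ac max_def)
  ultimately show ?thesis by blast
qed

lemma near_products_of_quotient:
  fixes \<eta> \<alpha> \<delta> :: real and p q u v w z :: int
  assumes \<eta>: "\<eta> \<ge> 1" and p: "p \<ge> 1" and q: "q \<ge> 1" and \<alpha>: "\<alpha> = of_int p / (of_int q * \<eta>)"
    and uvwz: "0 < u" "u < v" "0 < w" "w < z"
    and near: "\<eta> * of_int u * of_int v - of_int w * of_int z = - \<delta>" and \<delta>: "\<delta> > 0"
  shows "\<exists>e1 f1 e2 f2 :: int. 0 < e1 \<and> e1 < f1 \<and> 0 < e2 \<and> e2 < f2 \<and> max f1 f2 = p * q * max v z \<and>
           \<alpha> * of_int e1 * of_int f1 \<noteq> of_int e2 * of_int f2 \<and>
           \<bar>\<alpha> * of_int e1 * of_int f1 - of_int e2 * of_int f2\<bar> \<le> (of_int p)^2 * of_int q * \<delta>"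
proof -
  have "\<alpha> * of_int (q * w) * of_int (p * q * z) - of_int (p * u) * of_int (p * q * v)
      = - ((of_int p)^2 * of_int q * (\<eta> * of_int u * of_int v - of_int w * of_int z)) / \<eta>"
    using q \<eta> unfolding \<alpha> by (simp add: field_simps power2_eq_square)
  also have "\<dots> = (of_int p)^2 * of_int q * \<delta> / \<eta>"
    unfolding near by simp
  finally have diff: "\<alpha> * of_int (q * w) * of_int (p * q * z) - of_int (p * u) * of_int (p * q * v)
      = (of_int p)^2 * of_int q * \<delta> / \<eta>" .
  moreover have "0 < (of_int p)^2 * of_int q * \<delta> / \<eta>"
    "(of_int p)^2 * of_int q * \<delta> / \<eta> \<le> (of_int p)^2 * of_int q * \<delta>"
    using p q \<delta> \<eta> by (simp_all add: divide_le_eq)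
  ultimately have "\<alpha> * of_int (q * w) * of_int (p * q * z) \<noteq> of_int (p * u) * of_int (p * q * v)"
    "\<bar>\<alpha> * of_int (q * w) * of_int (p * q * z) - of_int (p * u) * of_int (p * q * v)\<bar> \<le> (of_int p)^2 * of_int q * \<delta>"
    by linarith+
  moreover have "0 < q * w" "q * w < p * q * z" "0 < p * u" "p * u < p * q * v"
    "max (p * q * z) (p * q * v) = p * q * max v z"
    using uvwz p q mult_less_mult_of_ge_one[of w z p q] mult_less_mult_of_ge_one[of u v q p]
    by (simp_all add: mult_ac max_def)
  ultimately show ?thesis by blast
qed

lemma spec_set_small_gap:
  fixes \<eta> \<alpha> :: real and t p q :: int
  assumes \<eta>: "\<eta> > 2" and t: "of_int t = \<eta> + 1 / \<eta>" and p: "p \<ge> 1" and q: "q \<ge> 1"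
    and \<alpha>: "\<alpha> = of_int p * \<eta> / of_int q \<or> \<alpha> = of_int p / (of_int q * \<eta>)" and k: "k \<ge> 1"
  shows "\<exists>s s'. s \<in> spec_set \<alpha> \<and> s' \<in> spec_set \<alpha> \<and> s < s' \<and>
           s' \<le> 16 * (\<alpha> + 1) * (of_int p * of_int q * \<eta>)^2 * (\<eta>^2)^k \<and>
           s' - s \<le> 4 * (of_int p)^2 * of_int q / (\<eta>^2)^k"
proof -
  obtain u v w z :: int where uvwz: "0 < u" "u < v" "0 < w" "w < z"
    and vz: "of_int v \<le> 2 * \<eta>^Suc k" "of_int z \<le> 2 * \<eta>^Suc k"
    and near: "\<eta> * of_int u * of_int v - of_int w * of_int z = - (1 / \<eta>^(2 * k))"
    using lucas_near_solution[OF \<eta> t k] by auto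
  obtain e1 f1 e2 f2 :: int where e: "0 < e1" "e1 < f1" "0 < e2" "e2 < f2"
    and f: "max f1 f2 = p * q * max v z" and ne: "\<alpha> * of_int e1 * of_int f1 \<noteq> of_int e2 * of_int f2"
    and gap: "\<bar>\<alpha> * of_int e1 * of_int f1 - of_int e2 * of_int f2\<bar> \<le> (of_int p)^2 * of_int q * (1 / \<eta>^(2 * k))"
    using \<alpha> near_products_of_multiple[OF p q _ uvwz near] near_products_of_quotient[OF _ p q _ uvwz near] \<eta>
    by fastforce
  define Y where "Y = of_int p * of_int q * (2 * \<eta>^Suc k)"
  have "of_int (p * q * max v z) \<le> Y"
    using vz p q unfolding Y_def by (simp add: mult_left_mono)
  then have "of_int f1 \<le> Y" "of_int f2 \<le> Y"
    unfolding f[symmetric] by linarith+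
  from spec_set_gap_from_products[OF _ e this ne] \<alpha> p q \<eta> obtain s s' where
    "s \<in> spec_set \<alpha>" "s' \<in> spec_set \<alpha>" "s < s'" "s' \<le> 4 * (\<alpha> + 1) * Y^2"
    "s' - s = 4 * \<bar>\<alpha> * of_int e1 * of_int f1 - of_int e2 * of_int f2\<bar>"
    by auto
  moreover have "4 * (\<alpha> + 1) * Y^2 = 16 * (\<alpha> + 1) * (of_int p * of_int q * \<eta>)^2 * (\<eta>^2)^k"
    unfolding Y_def by (simp add: power_mult_distrib power_mult[symmetric] mult.commute)
  moreover have "4 * \<bar>\<alpha> * of_int e1 * of_int f1 - of_int e2 * of_int f2\<bar> \<le> 4 * (of_int p)^2 * of_int q / (\<eta>^2)^k"
    using gap by (simp add: power_mult)
  ultimately show ?thesis by fastforce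
qed

lemma inverse_bound_from_geometric_scales:
  fixes \<delta> :: "nat \<Rightarrow> real" and \<rho> F G D :: real
  assumes \<rho>: "\<rho> > 1" and F: "F > 0"
    and bounded: "\<And>N. N \<ge> 2 \<Longrightarrow> \<delta> N \<le> D"
    and scales: "\<And>k N. F * \<rho>^k \<le> real N \<Longrightarrow> \<delta> N \<le> G / \<rho>^k"
  shows "\<exists>C>0. \<forall>N\<ge>2. \<delta> N \<le> C / real N"
proof (intro exI[of _ "(\<bar>D\<bar> + \<bar>G\<bar>) * F * \<rho> + 1"] conjI allI impI)
  let ?C = "(\<bar>D\<bar> + \<bar>G\<bar>) * F * \<rho> + 1"
  show "?C > 0" using \<rho> F by (simp add: add_nonneg_pos)
  fix N :: nat assume N: "N \<ge> 2"
  then have N_pos: "real N > 0" by simp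
  show "\<delta> N \<le> ?C / real N"
  proof (cases "real N < F")
    case True
    have "\<delta> N \<le> \<bar>D\<bar>" using bounded[OF N] by simp
    also have "\<dots> \<le> \<bar>D\<bar> * F * \<rho> / real N"
    proof -
      have "real N \<le> F * \<rho>" using True F \<rho> by (smt (verit) mult_le_cancel_left1)
      then have "\<bar>D\<bar> * real N \<le> \<bar>D\<bar> * F * \<rho>" by (simp add: mult_left_mono mult.assoc)
      then show ?thesis using N_pos by (simp add: pos_le_divide_eq)
    qed
    also have "\<dots> \<le> ?C / real N"
      using \<rho> F N_pos by (intro divide_right_mono) (simp_all add: algebra_simps)
    finally show ?thesis .
  next
    case False
    obtain n where "real N / F < \<rho>^n" using real_arch_pow[OF \<rho>] by blast
    then have "real N < F * \<rho>^n" using F by (simp add: field_simps)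
    then obtain k where k: "\<not> real N < F * \<rho>^k" "real N < F * \<rho>^Suc k"
      using ex_least_nat_less[of "\<lambda>i. real N < F * \<rho>^i"] False by auto
    have "\<delta> N \<le> G / \<rho>^k"
      using scales k(1) by (simp add: not_less)
    also have "\<dots> \<le> \<bar>G\<bar> / \<rho>^k"
      using \<rho> by (simp add: divide_right_mono)
    also have "\<dots> = \<bar>G\<bar> * F * \<rho> / (F * \<rho>^Suc k)"
      using F \<rho> by (simp add: field_simps)
    also have "\<dots> \<le> \<bar>G\<bar> * F * \<rho> / real N"
      using k(2) N_pos F \<rho> by (intro divide_left_mono) auto
    also have "\<dots> \<le> ?C / real N"
      using \<rho> F N_pos by (intro divide_right_mono) (simp_all add: algebra_simps)
    finally show ?thesis .
  qed
qed

lemma delta_min_inverse_bound: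
  fixes \<eta> \<alpha> :: real and t p q :: int
  assumes \<eta>: "\<eta> > 2" and t: "of_int t = \<eta> + 1 / \<eta>" and p: "p \<ge> 1" and q: "q \<ge> 1"
    and \<alpha>: "\<alpha> = of_int p * \<eta> / of_int q \<or> \<alpha> = of_int p / (of_int q * \<eta>)"
  shows "\<exists>C>0. \<forall>N\<ge>2. delta_min \<alpha> N \<le> C / real N"
proof -
  have \<alpha>_pos: "\<alpha> > 0" using \<alpha> p q \<eta> by auto
  define \<rho> where "\<rho> = \<eta>^2"
  define K where "K = 16 * (\<alpha> + 1) * (of_int p * of_int q * \<eta>)^2"
  define G where "G = 4 * (of_int p)^2 * (of_int q :: real)"
  define F where "F = K * \<rho> / sqrt \<alpha> + 1"
  have \<rho>: "\<rho> > 1" unfolding \<rho>_def using \<eta> by (simp add: one_less_power)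
  have F: "F > 0" unfolding F_def K_def using \<alpha>_pos \<rho> by (intro add_nonneg_pos divide_nonneg_nonneg mult_nonneg_nonneg) auto
  show ?thesis
  proof (rule inverse_bound_from_geometric_scales[OF \<rho> F delta_min_le_delta_min_2])
    fix k N assume N: "F * \<rho>^k \<le> real N"
    obtain s s' where s: "s \<in> spec_set \<alpha>" "s' \<in> spec_set \<alpha>" "s < s'"
      and s'_le: "s' \<le> K * \<rho>^Suc k" and gap: "s' - s \<le> G / \<rho>^Suc k"
      using spec_set_small_gap[OF \<eta> t p q \<alpha>, of "Suc k"] unfolding K_def G_def \<rho>_def by auto
    have "real (spec_rank \<alpha> s') \<le> s' / sqrt \<alpha>"
      using \<alpha>_pos spec_set_pos[OF _ s(2)] by (simp add: spec_rank_le_div_sqrt)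
    also have "\<dots> \<le> K * \<rho> / sqrt \<alpha> * \<rho>^k"
      using s'_le \<alpha>_pos by (simp add: divide_right_mono)
    also have "\<dots> < F * \<rho>^k"
      unfolding F_def using \<rho> by (simp add: algebra_simps)
    finally have "spec_rank \<alpha> s' < N" using N by simp
    then have "delta_min \<alpha> N \<le> s' - s"
      using delta_min_le_gap \<alpha>_pos s by blast
    also have "\<dots> \<le> G / \<rho> / \<rho>^k"
      using gap by simp
    finally show "delta_min \<alpha> N \<le> G / \<rho> / \<rho>^k" .
  qed
qed

lemma quadratic_unit_even_power:
  fixes e :: real and x \<sigma> a :: int
  assumes e: "e^2 = of_int x * e + of_int \<sigma>" and \<sigma>: "\<sigma> = 1 \<or> \<sigma> = -1" and a: "even a"
  shows "e powi a > 0 \<and> (\<exists>t. e powi a + 1 / e powi a = of_int t)"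
proof -
  have "e \<noteq> 0" using e \<sigma> by auto
  define f where "f = - of_int \<sigma> / e"
  have roots: "e + f = of_int x" "e * f = of_int (- \<sigma>)"
    using e \<open>e \<noteq> 0\<close> unfolding f_def by (auto simp: field_simps power2_eq_square)
  define n where "n = nat \<bar>a\<bar>"
  have "even n" using a unfolding n_def by (simp add: even_nat_iff)
  then have "(of_int (- \<sigma>) :: real)^n = 1" using \<sigma> by auto
  then have "e^n * f^n = 1"
    using roots(2) by (simp add: power_mult_distrib[symmetric])
  then have f_pow: "f^n = 1 / e^n"
    using \<open>e \<noteq> 0\<close> by (simp add: eq_divide_eq mult.commute)
  have e_pow: "e^n > 0" using \<open>even n\<close> \<open>e \<noteq> 0\<close> by (simp add: zero_less_power_eq)
  have "e powi a = e^n \<or> e powi a = 1 / e^n"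
    unfolding n_def by (auto simp: power_int_def power_inverse divide_inverse)
  then have "e powi a > 0 \<and> e powi a + 1 / e powi a = e^n + f^n"
    using e_pow f_pow by auto
  then show ?thesis
    using lucas_V_closed_form[OF roots, of n] by metis
qed

lemma plus_inverse_integer_above_two:
  fixes \<theta> :: real
  assumes "\<theta> > 0" "\<theta> \<noteq> 1" "\<theta> + 1 / \<theta> = of_int t"
  shows "\<exists>\<eta>>2. of_int t = \<eta> + 1 / \<eta> \<and> (\<theta> = \<eta> \<or> \<theta> = 1 / \<eta>)"
proof -
  define \<eta> where "\<eta> = max \<theta> (1 / \<theta>)"
  have "1 < \<theta> \<or> 1 < 1 / \<theta>"
    using assms(1,2) by (cases "\<theta> < 1") (auto simp: field_simps)
  then have \<eta>1: "\<eta> > 1" unfolding \<eta>_def by auto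
  have \<theta>\<eta>: "\<theta> = \<eta> \<or> \<theta> = 1 / \<eta>" and t: "of_int t = \<eta> + 1 / \<eta>"
    using assms(3) unfolding \<eta>_def by (auto simp: max_def)
  have "\<eta> + 1 / \<eta> - 2 = (\<eta> - 1)^2 / \<eta>"
    using \<eta>1 by (simp add: field_simps power2_eq_square)
  then have "of_int t > (2 :: real)" using \<eta>1 t by (smt (verit) divide_pos_pos zero_less_power)
  then have "t \<ge> 3" by simp
  then have "\<eta> + 1 / \<eta> \<ge> 3" using t by (metis of_int_le_iff of_int_numeral)
  moreover have "\<eta> + 1 / \<eta> < 3" if "\<eta> \<le> 2"
  proof -
    have "(\<eta> - 1) * (\<eta> - 2) \<le> 0" using that \<eta>1 by (intro mult_nonneg_nonpos) auto
    then show ?thesis using \<eta>1 by (simp add: field_simps algebra_simps)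
  qed
  ultimately show ?thesis using t \<theta>\<eta> by (intro exI[of _ \<eta>]) force
qed

lemma positive_rational_as_quotient:
  fixes c :: real
  assumes "c \<in> \<rat>" "c > 0"
  obtains p q :: int where "p \<ge> 1" "q \<ge> 1" "c = of_int p / of_int q"
proof -
  obtain p q :: int where "q > 0" "c = of_int p / of_int q"
    using Rats_cases'[OF assms(1)] by metis
  moreover have "p > 0" using calculation assms(2) by (simp add: zero_less_divide_iff)
  ultimately show ?thesis using that[of p q] by simp
qed

theorem mainTheorem9:
  fixes a x :: int and \<sigma> :: int and r :: rat and \<alpha> :: real
  assumes "a \<noteq> 0" and "even a"
    and "x \<noteq> 0"
    and "\<sigma> = 1 \<or> \<sigma> = -1"
    and "r \<noteq> 0"
    and "(of_int x)^2 + 4 * of_int \<sigma> \<ge> (0::real)"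
    and "\<alpha> = of_rat r * ((of_int x + sqrt ((of_int x)^2 + 4 * of_int \<sigma>)) / 2) powi a"
    and "\<alpha> > 0"
    and "\<alpha> \<notin> \<rat>"
  shows "\<exists>C > 0. \<forall>N :: nat. N \<ge> 2 \<longrightarrow> delta_min \<alpha> N \<le> C / real N"
proof -
  define e where "e = (of_int x + sqrt ((of_int x)^2 + 4 * of_int \<sigma>)) / 2"
  have "(sqrt ((of_int x)^2 + 4 * of_int \<sigma>))^2 = (of_int x)^2 + 4 * (of_int \<sigma> :: real)"
    using assms(6) by simp
  then have "e^2 = of_int x * e + of_int \<sigma>"
    unfolding e_def by (simp add: power2_eq_square field_simps)
  then obtain t where \<theta>: "e powi a > 0" "e powi a + 1 / e powi a = of_int t"
    using quadratic_unit_even_power assms(2,4) by blast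
  have \<alpha>: "\<alpha> = of_rat r * e powi a" using assms(7) by (simp add: e_def)
  then have "e powi a \<noteq> 1" using assms(9) by auto
  then obtain \<eta> where \<eta>: "\<eta> > 2" "of_int t = \<eta> + 1 / \<eta>" "e powi a = \<eta> \<or> e powi a = 1 / \<eta>"
    using plus_inverse_integer_above_two \<theta> by blast
  have "of_rat r > (0 :: real)" using assms(8) \<alpha> \<theta>(1) by (simp add: zero_less_mult_iff)
  then obtain p q :: int where pq: "p \<ge> 1" "q \<ge> 1" "of_rat r = of_int p / (of_int q :: real)"
    using positive_rational_as_quotient Rats_of_rat by blast
  have "\<alpha> = of_int p * \<eta> / of_int q \<or> \<alpha> = of_int p / (of_int q * \<eta>)"
    using \<alpha> \<eta>(3) pq(3) by auto
  from delta_min_inverse_bound[OF \<eta>(1,2) pq(1,2) this] show ?thesis by simp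
qed

end
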